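(* Consider a finite-space SSP game (as in the context) satisfying the Finite-Space SSP Game Model Assumption, the Q-learning iterates $\{Q_t\}$, and the sequence $\{\hat Q_t\}$ defined in the context from an essentially proper policy $\bar\nu\in\Pi_{2,SR}$ of player II. If $\{\hat Q_t\}$ is bounded below with probability 1, then so is $\{Q_t\}$.
   Context: Finite-space game: $S=\{1,\dots,n\}$, $S_o=S\cup\{0\}$, $0$ absorbing cost-free termination state. At $i\in S$ players I and II have finite control sets $U(i),V(i)$; under $(u,v)$ the state moves to $j\in S_o$ w.p. $p_{ij}(u,v)$ with transition cost $\hat g(i,u,v,j)$ paid by player I to player II. $J(i;\pi_1,\pi_2)=\liminf_{t\to\infty}E_{\pi_1\pi_2}[\sum_{k=0}^t\hat g(i_k,u_k,v_k,i_{k+1})\mid i_0=i]$. $\bar U(i)=\mathcal P(U(i))$, $\bar V(i)=\mathcal P(V(i))$; $\Pi_{1,SR},\Pi_{2,SR}$ stationary randomized policies. Prolonging pair: for some initial state the termination state is with positive probability never reached. $\nu\in\Pi_{2,SR}$ is essentially proper if some $\mu\in\Pi_{1,SR}$ makes $(\mu,\nu)$ non-prolonging and every $\mu\in\Pi_{1,SR}$ with $(\mu,\nu)$ prolonging has $J(i;\mu,\nu)=+\infty$ for some $i$. Finite-Space SSP Game Model Assumption: (i) there is $\bar\mu\in\Pi_{1,SR}$ with $J(i;\bar\mu,\nu)<+\infty$ for all $\nu\in\Pi_{2,SR}$, all $i$; (ii) there is $\bar\nu\in\Pi_{2,SR}$ with $J(i;\mu,\bar\nu)>-\infty$ for all $\mu$,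 all $i$; (iii) every prolonging pair in $\Pi_{1,SR}\times\Pi_{2,SR}$ has $J(i;\mu,\nu)\in\{\pm\infty\}$ for some $i$. Under this assumption an essentially proper $\bar\nu\in\Pi_{2,SR}$ exists; fix one and write $\bar\nu_s=\bar\nu(\cdot\mid s)$ (with $\bar\nu_0$ the point mass at $0$). Q-learning: $R=\{(i,u,v)\}$, $U(0)=V(0)=\{0\}$, vectors indexed by $R\cup\{(0,0,0)\}$ with value $0$ at $(0,0,0)$; $\underline Q(s,\rho,\sigma)=\sum_{\tilde u,\tilde v}\rho(\tilde u)\sigma(\tilde v)Q(s,\tilde u,\tilde v)$. Given random variables (on a common probability space) $Q_0$, stepsizes $\gamma_{t,\ell}\in[0,1]$, delays $0\le\tau_{\ell\tilde\ell}(t)\le t$, successors $j_t^\ell\in S_o$ ($\ell,\tilde\ell\in R$, $t\ge0$), the Q-learning iterates are $Q_{t+1}(i,u,v)=(1-\gamma_{t,\ell})Q_t(i,u,v)+\gamma_{t,\ell}(\hat g(i,u,v,s)+\inf_{\rho\in\bar U(s)}\sup_{\sigma\in\bar V(s)}\underline Q^{(\ell)}_t(s,\rho,\sigma))$ with $\ell=(i,u,v)$, $s=j_t^\ell$, $Q^{(\ell)}_t(\tilde\ell)=Q_{\tau_{\ell\tilde\ell}(t)}(\tilde\ell)$. The sequence $\{\hat Q_t\}$ uses the same random variables: $\hat Q_0=Q_0$ and $\hat Q_{t+1}(i,u,v)=(1-\gamma_{t,\ell})\hat Q_t(i,u,v)+\gamma_{t,\ell}(\hat g(i,u,v,s)+\inf_{\rho\in\bar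 U(s)}\underline{\hat Q}^{(\ell)}_t(s,\rho,\bar\nu_s))$, where $\hat Q^{(\ell)}_t(\tilde\ell)=\hat Q_{\tau_{\ell\tilde\ell}(t)}(\tilde\ell)$. *)

theory Defs
  imports "HOL-Probability.Probability"
begin

text \<open>States S = {1..n}, termination state 0.
  Controls U i, V i; transition probabilities p i j u v; transition cost g i u v j.\<close>

definition Pi1 :: "nat \<Rightarrow> (nat \<Rightarrow> 'u set) \<Rightarrow> (nat \<Rightarrow> 'u pmf) set" where
  "Pi1 n U = {\<mu>. \<forall>i\<in>{1..n}. set_pmf (\<mu> i) \<subseteq> U i}"

definition Pi2 :: "nat \<Rightarrow> (nat \<Rightarrow> 'v set) \<Rightarrow> (nat \<Rightarrow> 'v pmf) set" where
  "Pi2 n V = {\<nu>. \<forall>i\<in>{1..n}. set_pmf (\<nu> i) \<subseteq> V i}"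

definition chain ::
  "nat \<Rightarrow> (nat \<Rightarrow> 'u set) \<Rightarrow> (nat \<Rightarrow> 'v set) \<Rightarrow> (nat \<Rightarrow> nat \<Rightarrow> 'u \<Rightarrow> 'v \<Rightarrow> real)
    \<Rightarrow> (nat \<Rightarrow> 'u pmf) \<Rightarrow> (nat \<Rightarrow> 'v pmf) \<Rightarrow> nat \<Rightarrow> nat \<Rightarrow> real" where
  "chain n U V p \<mu> \<nu> i j =
     (if i \<in> {1..n} then (\<Sum>u\<in>U i. \<Sum>v\<in>V i. pmf (\<mu> i) u * pmf (\<nu> i) v * p i j u v)
      else if j = 0 then 1 else 0)"

fun mpow :: "nat \<Rightarrow> (nat \<Rightarrow> nat \<Rightarrow> real) \<Rightarrow> nat \<Rightarrow> nat \<Rightarrow> nat \<Rightarrow> real" where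
  "mpow n P 0 i j = (if i = j then 1 else 0)"
| "mpow n P (Suc k) i j = (\<Sum>m\<in>{0..n}. mpow n P k i m * P m j)"

definition stage_cost ::
  "nat \<Rightarrow> (nat \<Rightarrow> 'u set) \<Rightarrow> (nat \<Rightarrow> 'v set) \<Rightarrow> (nat \<Rightarrow> nat \<Rightarrow> 'u \<Rightarrow> 'v \<Rightarrow> real)
    \<Rightarrow> (nat \<Rightarrow> 'u \<Rightarrow> 'v \<Rightarrow> nat \<Rightarrow> real) \<Rightarrow> (nat \<Rightarrow> 'u pmf) \<Rightarrow> (nat \<Rightarrow> 'v pmf) \<Rightarrow> nat \<Rightarrow> real" where
  "stage_cost n U V p g \<mu> \<nu> i =
     (if i \<in> {1..n} then
        (\<Sum>u\<in>U i. \<Sum>v\<in>V i. \<Sum>j\<in>{0..n}. pmf (\<mu> i) u * pmf (\<nu> i) v * p i j u v * g i u v j)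
      else 0)"

text \<open>J(i; mu, nu) = liminf_t E[sum_{k=0}^t g(i_k,u_k,v_k,i_{k+1}) | i_0 = i].\<close>
definition Jcost ::
  "nat \<Rightarrow> (nat \<Rightarrow> 'u set) \<Rightarrow> (nat \<Rightarrow> 'v set) \<Rightarrow> (nat \<Rightarrow> nat \<Rightarrow> 'u \<Rightarrow> 'v \<Rightarrow> real)
    \<Rightarrow> (nat \<Rightarrow> 'u \<Rightarrow> 'v \<Rightarrow> nat \<Rightarrow> real) \<Rightarrow> (nat \<Rightarrow> 'u pmf) \<Rightarrow> (nat \<Rightarrow> 'v pmf) \<Rightarrow> nat \<Rightarrow> ereal" where
  "Jcost n U V p g \<mu> \<nu> i =
     liminf (\<lambda>t. ereal (\<Sum>k\<le>t. \<Sum>j\<in>{0..n}.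
        mpow n (chain n U V p \<mu> \<nu>) k i j * stage_cost n U V p g \<mu> \<nu> j))"

text \<open>Prolonging: for some initial state, termination is never reached with positive
  probability. Since 0 is absorbing, P(reach 0 by time k) = mpow k i 0, nondecreasing in k,
  and P(never reach 0) = 1 - sup_k mpow k i 0.\<close>
definition prolonging ::
  "nat \<Rightarrow> (nat \<Rightarrow> 'u set) \<Rightarrow> (nat \<Rightarrow> 'v set) \<Rightarrow> (nat \<Rightarrow> nat \<Rightarrow> 'u \<Rightarrow> 'v \<Rightarrow> real)
    \<Rightarrow> (nat \<Rightarrow> 'u pmf) \<Rightarrow> (nat \<Rightarrow> 'v pmf) \<Rightarrow> bool" where
  "prolonging n U V p \<mu> \<nu> \<longleftrightarrow>
     (\<exists>i\<in>{1..n}. (SUP k. mpow n (chain n U V p \<mu> \<nu>) k i 0) < 1)"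

definition essentially_proper ::
  "nat \<Rightarrow> (nat \<Rightarrow> 'u set) \<Rightarrow> (nat \<Rightarrow> 'v set) \<Rightarrow> (nat \<Rightarrow> nat \<Rightarrow> 'u \<Rightarrow> 'v \<Rightarrow> real)
    \<Rightarrow> (nat \<Rightarrow> 'u \<Rightarrow> 'v \<Rightarrow> nat \<Rightarrow> real) \<Rightarrow> (nat \<Rightarrow> 'v pmf) \<Rightarrow> bool" where
  "essentially_proper n U V p g \<nu> \<longleftrightarrow>
     \<nu> \<in> Pi2 n V \<and>
     (\<exists>\<mu>\<in>Pi1 n U. \<not> prolonging n U V p \<mu> \<nu>) \<and>
     (\<forall>\<mu>\<in>Pi1 n U. prolonging n U V p \<mu> \<nu> \<longrightarrow>
        (\<exists>i\<in>{1..n}. Jcost n U V p g \<mu> \<nu> i = \<infinity>))"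

definition ssp_game_assumption ::
  "nat \<Rightarrow> (nat \<Rightarrow> 'u set) \<Rightarrow> (nat \<Rightarrow> 'v set) \<Rightarrow> (nat \<Rightarrow> nat \<Rightarrow> 'u \<Rightarrow> 'v \<Rightarrow> real)
    \<Rightarrow> (nat \<Rightarrow> 'u \<Rightarrow> 'v \<Rightarrow> nat \<Rightarrow> real) \<Rightarrow> bool" where
  "ssp_game_assumption n U V p g \<longleftrightarrow>
     (\<exists>\<mu>\<in>Pi1 n U. \<forall>\<nu>\<in>Pi2 n V. \<forall>i\<in>{1..n}. Jcost n U V p g \<mu> \<nu> i < \<infinity>) \<and>
     (\<exists>\<nu>\<in>Pi2 n V. \<forall>\<mu>\<in>Pi1 n U. \<forall>i\<in>{1..n}. Jcost n U V p g \<mu> \<nu> i > -\<infinity>) \<and>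
     (\<forall>\<mu>\<in>Pi1 n U. \<forall>\<nu>\<in>Pi2 n V. prolonging n U V p \<mu> \<nu> \<longrightarrow>
        (\<exists>i\<in>{1..n}. Jcost n U V p g \<mu> \<nu> i \<in> {\<infinity>, -\<infinity>}))"

text \<open>Q-learning. Index set R; the component (0,0,0) of Q-vectors is identically 0,
  so Q-bar(0, rho, sigma) = 0 and the min-max term at the termination state is 0.\<close>
definition Rset :: "nat \<Rightarrow> (nat \<Rightarrow> 'u set) \<Rightarrow> (nat \<Rightarrow> 'v set) \<Rightarrow> (nat \<times> 'u \<times> 'v) set" where
  "Rset n U V = {(i, u, v). i \<in> {1..n} \<and> u \<in> U i \<and> v \<in> V i}"

definition underQ ::
  "(nat \<Rightarrow> 'u set) \<Rightarrow> (nat \<Rightarrow> 'v set) \<Rightarrow> (nat \<times> 'u \<times> 'v \<Rightarrow> real) \<Rightarrow> nat \<Rightarrow> 'u pmf \<Rightarrow> 'v pmf \<Rightarrow> real" where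
  "underQ U V Q s \<rho> \<sigma> = (\<Sum>u\<in>U s. \<Sum>v\<in>V s. pmf \<rho> u * pmf \<sigma> v * Q (s, u, v))"

definition minimax_val ::
  "(nat \<Rightarrow> 'u set) \<Rightarrow> (nat \<Rightarrow> 'v set) \<Rightarrow> (nat \<times> 'u \<times> 'v \<Rightarrow> real) \<Rightarrow> nat \<Rightarrow> real" where
  "minimax_val U V Q s =
     (if s = 0 then 0 else
        (INF \<rho>\<in>{\<rho>. set_pmf \<rho> \<subseteq> U s}. SUP \<sigma>\<in>{\<sigma>. set_pmf \<sigma> \<subseteq> V s}. underQ U V Q s \<rho> \<sigma>))"

definition inf_val ::
  "(nat \<Rightarrow> 'u set) \<Rightarrow> (nat \<Rightarrow> 'v set) \<Rightarrow> (nat \<Rightarrow> 'v pmf) \<Rightarrow> (nat \<times> 'u \<times> 'v \<Rightarrow> real) \<Rightarrow> nat \<Rightarrow> real" where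
  "inf_val U V \<nu> Q s =
     (if s = 0 then 0 else (INF \<rho>\<in>{\<rho>. set_pmf \<rho> \<subseteq> U s}. underQ U V Q s \<rho> (\<nu> s)))"

end

theory Submission
  imports Defs
begin

text \<open>Both iterations are driven by the same stepsizes, delays and successor samples, and the
  update is monotone in the delayed iterate. Fixing player II's mixed action at the essentially
  proper policy can only lower the inner supremum of the minimax value, so by strong induction
  on time (delays never exceed the current time) \<open>Qh\<close> stays below \<open>Q\<close> componentwise on every
  sample path.\<close>

lemma underQ_le_sum_abs:
  "underQ U V Q s \<rho> \<sigma> \<le> (\<Sum>u\<in>U s. \<Sum>v\<in>V s. \<bar>Q (s, u, v)\<bar>)"
  unfolding underQ_def
proof (intro sum_mono)
  fix u v
  have "pmf \<rho> u * pmf \<sigma> v * Q (s, u, v) \<le> pmf \<rho> u * pmf \<sigma> v * \<bar>Q (s, u, v)\<bar>"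
    by (simp add: mult_left_mono)
  also have "\<dots> \<le> 1 * \<bar>Q (s, u, v)\<bar>"
    by (intro mult_right_mono) (simp_all add: mult_le_one pmf_le_1)
  finally show "pmf \<rho> u * pmf \<sigma> v * Q (s, u, v) \<le> \<bar>Q (s, u, v)\<bar>" by simp
qed

lemma underQ_ge_neg_sum_abs:
  "- (\<Sum>u\<in>U s. \<Sum>v\<in>V s. \<bar>Q (s, u, v)\<bar>) \<le> underQ U V Q s \<rho> \<sigma>"
proof -
  have "underQ U V (\<lambda>l. - Q l) s \<rho> \<sigma> = - underQ U V Q s \<rho> \<sigma>"
    unfolding underQ_def by (simp add: sum_negf)
  with underQ_le_sum_abs[of U V "\<lambda>l. - Q l" s \<rho> \<sigma>] show ?thesis by simp
qed

lemma underQ_mono: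
  assumes "\<forall>u\<in>U s. \<forall>v\<in>V s. Q (s, u, v) \<le> Q' (s, u, v)"
  shows "underQ U V Q s \<rho> \<sigma> \<le> underQ U V Q' s \<rho> \<sigma>"
  unfolding underQ_def using assms by (intro sum_mono) (simp add: mult_left_mono)

lemma inf_val_le_minimax_val:
  assumes U_ne: "U s \<noteq> {}"
    and \<nu>_V: "set_pmf (\<nu> s) \<subseteq> V s"
    and le: "\<forall>u\<in>U s. \<forall>v\<in>V s. Q (s, u, v) \<le> Q' (s, u, v)"
  shows "inf_val U V \<nu> Q s \<le> minimax_val U V Q' s"
proof -
  let ?PU = "{\<rho>. set_pmf \<rho> \<subseteq> U s}" and ?PV = "{\<sigma>. set_pmf \<sigma> \<subseteq> V s}"
  obtain u0 where "u0 \<in> U s" using U_ne by blast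
  then have "return_pmf u0 \<in> ?PU" by simp
  then have PU_ne: "?PU \<noteq> {}" by blast
  have bdd: "bdd_below ((\<lambda>\<rho>. underQ U V Q s \<rho> (\<nu> s)) ` ?PU)"
    using underQ_ge_neg_sum_abs by (intro bdd_belowI2) blast
  have "(INF \<rho>\<in>?PU. underQ U V Q s \<rho> (\<nu> s)) \<le> (INF \<rho>\<in>?PU. SUP \<sigma>\<in>?PV. underQ U V Q' s \<rho> \<sigma>)"
  proof (rule cINF_mono[OF PU_ne bdd])
    fix \<rho> assume \<rho>: "\<rho> \<in> ?PU"
    have "underQ U V Q s \<rho> (\<nu> s) \<le> underQ U V Q' s \<rho> (\<nu> s)"
      using underQ_mono le by blast
    also have "\<dots> \<le> (SUP \<sigma>\<in>?PV. underQ U V Q' s \<rho> \<sigma>)"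
      using \<nu>_V underQ_le_sum_abs by (intro cSUP_upper bdd_aboveI2) auto
    finally show "\<exists>\<rho>'\<in>?PU. underQ U V Q s \<rho>' (\<nu> s) \<le> (SUP \<sigma>\<in>?PV. underQ U V Q' s \<rho> \<sigma>)"
      using \<rho> by blast
  qed
  then show ?thesis by (simp add: inf_val_def minimax_val_def)
qed

lemma inf_val_le_minimax_val_Rset:
  assumes U_ne: "\<forall>i\<in>{1..n}. U i \<noteq> {}"
    and \<nu>: "\<nu> \<in> Pi2 n V"
    and s: "s \<in> {0..n}"
    and le: "\<forall>l\<in>Rset n U V. Q l \<le> Q' l"
  shows "inf_val U V \<nu> Q s \<le> minimax_val U V Q' s"
proof (cases "s = 0")
  case True
  then show ?thesis by (simp add: inf_val_def minimax_val_def)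
next
  case False
  with s have "s \<in> {1..n}" by simp
  with U_ne \<nu> le show ?thesis
    by (intro inf_val_le_minimax_val) (auto simp: Pi2_def Rset_def)
qed

lemma async_iteration_le:
  fixes x y :: "nat \<Rightarrow> 'l \<Rightarrow> real"
  assumes init: "\<forall>l\<in>R. x 0 l \<le> y 0 l"
    and step_size: "\<forall>t. \<forall>l\<in>R. 0 \<le> a t l \<and> a t l \<le> 1"
    and delay: "\<forall>t. \<forall>l\<in>R. \<forall>l'\<in>R. \<tau> l l' t \<le> t"
    and x_step: "\<forall>t. \<forall>l\<in>R. x (Suc t) l =
        (1 - a t l) * x t l + a t l * (c t l + F t l (\<lambda>l'. x (\<tau> l l' t) l'))"
    and y_step: "\<forall>t. \<forall>l\<in>R. y (Suc t) l =
        (1 - a t l) * y t l + a t l * (c t l + G t l (\<lambda>l'. y (\<tau> l l' t) l'))"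
    and F_le_G: "\<forall>t. \<forall>l\<in>R. \<forall>X Y. (\<forall>l'\<in>R. X l' \<le> Y l') \<longrightarrow> F t l X \<le> G t l Y"
  shows "\<forall>l\<in>R. x t l \<le> y t l"
proof (induction t rule: less_induct)
  case (less t)
  show ?case
  proof (cases t)
    case 0
    with init show ?thesis by simp
  next
    case (Suc t0)
    show ?thesis
    proof
      fix l assume l: "l \<in> R"
      have a: "0 \<le> a t0 l" "a t0 l \<le> 1" using step_size l by auto
      have "\<forall>l'\<in>R. x (\<tau> l l' t0) l' \<le> y (\<tau> l l' t0) l'"
        using less.IH delay l Suc by (metis le_imp_less_Suc)
      then have "F t0 l (\<lambda>l'. x (\<tau> l l' t0) l') \<le> G t0 l (\<lambda>l'. y (\<tau> l l' t0) l')"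
        using F_le_G l by simp
      moreover have "x t0 l \<le> y t0 l" using less.IH Suc l by simp
      ultimately show "x t l \<le> y t l"
        using x_step y_step l a Suc
        by (simp add: add_mono mult_left_mono)
    qed
  qed
qed

theorem lemma4p1:
  fixes n :: nat
    and U :: "nat \<Rightarrow> 'u set" and V :: "nat \<Rightarrow> 'v set"
    and p :: "nat \<Rightarrow> nat \<Rightarrow> 'u \<Rightarrow> 'v \<Rightarrow> real"
    and g :: "nat \<Rightarrow> 'u \<Rightarrow> 'v \<Rightarrow> nat \<Rightarrow> real"
    and \<nu>bar :: "nat \<Rightarrow> 'v pmf"
    and M :: "'w measure"
    and \<gamma> :: "nat \<Rightarrow> nat \<times> 'u \<times> 'v \<Rightarrow> 'w \<Rightarrow> real"
    and \<tau> :: "nat \<times> 'u \<times> 'v \<Rightarrow> nat \<times> 'u \<times> 'v \<Rightarrow> nat \<Rightarrow> 'w \<Rightarrow> nat"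
    and js :: "nat \<Rightarrow> nat \<times> 'u \<times> 'v \<Rightarrow> 'w \<Rightarrow> nat"
    and Q Qh :: "'w \<Rightarrow> nat \<Rightarrow> nat \<times> 'u \<times> 'v \<Rightarrow> real"
  assumes U_fin: "\<forall>i\<in>{1..n}. finite (U i) \<and> U i \<noteq> {}"
    and V_fin: "\<forall>i\<in>{1..n}. finite (V i) \<and> V i \<noteq> {}"
    and p_nonneg: "\<forall>i\<in>{1..n}. \<forall>u\<in>U i. \<forall>v\<in>V i. \<forall>j\<in>{0..n}. 0 \<le> p i j u v"
    and p_sum: "\<forall>i\<in>{1..n}. \<forall>u\<in>U i. \<forall>v\<in>V i. (\<Sum>j\<in>{0..n}. p i j u v) = 1"
    and game: "ssp_game_assumption n U V p g"
    and ess: "essentially_proper n U V p g \<nu>bar"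
    and M_prob: "prob_space M"
    and meas_Q0: "\<forall>l\<in>Rset n U V. (\<lambda>\<omega>. Q \<omega> 0 l) \<in> borel_measurable M"
    and meas_\<gamma>: "\<forall>t. \<forall>l\<in>Rset n U V. \<gamma> t l \<in> borel_measurable M"
    and meas_\<tau>: "\<forall>t. \<forall>l\<in>Rset n U V. \<forall>l'\<in>Rset n U V. \<tau> l l' t \<in> measurable M (count_space UNIV)"
    and meas_js: "\<forall>t. \<forall>l\<in>Rset n U V. js t l \<in> measurable M (count_space UNIV)"
    and \<gamma>_range: "\<forall>\<omega> t. \<forall>l\<in>Rset n U V. 0 \<le> \<gamma> t l \<omega> \<and> \<gamma> t l \<omega> \<le> 1"
    and \<tau>_range: "\<forall>\<omega> t. \<forall>l\<in>Rset n U V. \<forall>l'\<in>Rset n U V. \<tau> l l' t \<omega> \<le> t"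
    and js_range: "\<forall>\<omega> t. \<forall>l\<in>Rset n U V. js t l \<omega> \<in> {0..n}"
    and Q_step: "\<forall>\<omega> t i u v. (i, u, v) \<in> Rset n U V \<longrightarrow>
        Q \<omega> (Suc t) (i, u, v) =
          (1 - \<gamma> t (i, u, v) \<omega>) * Q \<omega> t (i, u, v)
          + \<gamma> t (i, u, v) \<omega> * (g i u v (js t (i, u, v) \<omega>)
              + minimax_val U V (\<lambda>l'. Q \<omega> (\<tau> (i, u, v) l' t \<omega>) l') (js t (i, u, v) \<omega>))"
    and Qh_0: "\<forall>\<omega>. \<forall>l\<in>Rset n U V. Qh \<omega> 0 l = Q \<omega> 0 l"
    and Qh_step: "\<forall>\<omega> t i u v. (i, u, v) \<in> Rset n U V \<longrightarrow>
        Qh \<omega> (Suc t) (i, u, v) =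
          (1 - \<gamma> t (i, u, v) \<omega>) * Qh \<omega> t (i, u, v)
          + \<gamma> t (i, u, v) \<omega> * (g i u v (js t (i, u, v) \<omega>)
              + inf_val U V \<nu>bar (\<lambda>l'. Qh \<omega> (\<tau> (i, u, v) l' t \<omega>) l') (js t (i, u, v) \<omega>))"
    and Qh_bdd: "AE \<omega> in M. \<exists>b. \<forall>t. \<forall>l\<in>Rset n U V. b \<le> Qh \<omega> t l"
  shows "AE \<omega> in M. \<exists>b. \<forall>t. \<forall>l\<in>Rset n U V. b \<le> Q \<omega> t l"
proof -
  have \<nu>bar: "\<nu>bar \<in> Pi2 n V" using ess by (simp add: essentially_proper_def)
  have Qh_le_Q: "\<forall>l\<in>Rset n U V. Qh \<omega> t l \<le> Q \<omega> t l" for \<omega> t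
  proof (rule async_iteration_le
      [where a = "\<lambda>t l. \<gamma> t l \<omega>" and \<tau> = "\<lambda>l l' t. \<tau> l l' t \<omega>"
         and c = "\<lambda>t (i, u, v). g i u v (js t (i, u, v) \<omega>)"
         and F = "\<lambda>t l X. inf_val U V \<nu>bar X (js t l \<omega>)"
         and G = "\<lambda>t l X. minimax_val U V X (js t l \<omega>)"])
    show "\<forall>t. \<forall>l\<in>Rset n U V. \<forall>X Y. (\<forall>l'\<in>Rset n U V. X l' \<le> Y l') \<longrightarrow>
        inf_val U V \<nu>bar X (js t l \<omega>) \<le> minimax_val U V Y (js t l \<omega>)"
      using U_fin \<nu>bar js_range by (blast intro: inf_val_le_minimax_val_Rset)
  qed (use Qh_0 \<gamma>_range \<tau>_range Q_step Qh_step in auto)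
  from Qh_bdd show ?thesis
    by (rule eventually_mono) (use Qh_le_Q order_trans in blast)
qed

end
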